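(* Let $G=\mathbb{Z}_{N_1}\oplus\cdots\oplus\mathbb{Z}_{N_k}$ be a finite Abelian group (each $N_j$ a prime power), let $K\le G$ and let $f:G\to G$ satisfy $f(x)=f(y)\iff x-y\in K$. Let $0<\epsilon<1$ and run the following procedure with $h$ iterations: in each iteration $i=1,\dots,h$ (independently), prepare $|0\rangle\cdots|0\rangle|0_G\rangle\in\mathcal{H}_{N_1}\otimes\cdots\otimes\mathcal{H}_{N_k}\otimes\mathcal{H}_G$, apply $\mathrm{QFT}_{N_1}\otimes\cdots\otimes\mathrm{QFT}_{N_k}\otimes \mathrm{I}_G$, then $U_f$, then $\mathrm{QFT}_{N_1}^\dagger\otimes\cdots\otimes\mathrm{QFT}_{N_k}^\dagger\otimes \mathrm{I}_G$, and measure the first $k$ registers in the computational basis, obtaining $\mathbf{t}_i\in G$. Let $T_h=\{\mathbf{t}_1,\dots,\mathbf{t}_h\}$ and output $A=\{x\in G:\langle \mathbf{t}_i,x\rangle=0 \text{ for all } i\}=(\mathrm{span}(T_h))^{\perp}$. Then $\Pr(A=K)\ge 1-\epsilon$ provided \[ h\ \ge\ \mathrm{rank}(G)+\left\lceil \log_2 \tfrac{2}{\epsilon}\right\rceil \quad\text{or}\quad h\ \ge\ \mathrm{len}(G)-\mathrm{len}(K)+\left\lceil \log_2 \tfrac{1}{\epsilon}\right\rceil. \]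
   Context: Elements of $G$ are tuples $x=(x_1,\dots,x_k)$ with $x_j\in\{0,\dots,N_j-1\}$. The bilinear form is $\langle x,y\rangle=\sum_{j=1}^k x_jy_j/N_j \pmod 1\in\mathbb{R}/\mathbb{Z}$, and for $H\le G$, $H^\perp=\{g\in G:\langle h,g\rangle=0 \ \forall h\in H\}$; $\mathrm{span}(T)$ is the subgroup generated by $T$. $\mathrm{rank}(G)$ is the minimal size of a generating set of $G$; $\mathrm{len}(G)$ is the length of a composition series of $G$ (for $|G|=\prod p_i^{e_i}$ this is $\sum e_i$). $\mathcal{H}_{N}$ is the $N$-dimensional Hilbert space with orthonormal basis $\{|x\rangle:x\in\mathbb{Z}_N\}$, $\mathcal{H}_G=\bigotimes_j\mathcal{H}_{N_j}$ with basis $\{|g\rangle: g\in G\}$, $\mathrm{I}_G$ its identity, and $\mathrm{QFT}_N|x\rangle=\frac{1}{\sqrt N}\sum_{y=0}^{N-1}e^{2\pi i xy/N}|y\rangle$. The oracle $U_f$ acts on $\mathcal{H}_G\otimes\mathcal{H}_G$ by $U_f|g\rangle|b\rangle=|g\rangle|b+f(g)\rangle$ (addition in $G$); $0_G$ is the zero of $G$. *)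

theory Defs
  imports Complex_Main "HOL-Computational_Algebra.Primes"
begin

text \<open>The group G = Z_{N_0} + ... + Z_{N_(k-1)}; elements are functions nat => nat
  with x j < N j for j < k and x j = 0 for j >= k.\<close>

definition grp :: "(nat \<Rightarrow> nat) \<Rightarrow> nat \<Rightarrow> (nat \<Rightarrow> nat) set" where
  "grp N k = {x. (\<forall>j<k. x j < N j) \<and> (\<forall>j\<ge>k. x j = 0)}"

definition gzero :: "nat \<Rightarrow> nat" where
  "gzero = (\<lambda>j. 0)"

definition gadd :: "(nat \<Rightarrow> nat) \<Rightarrow> nat \<Rightarrow> (nat \<Rightarrow> nat) \<Rightarrow> (nat \<Rightarrow> nat) \<Rightarrow> (nat \<Rightarrow> nat)" where
  "gadd N k x y = (\<lambda>j. if j < k then (x j + y j) mod N j else 0)"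

definition gneg :: "(nat \<Rightarrow> nat) \<Rightarrow> nat \<Rightarrow> (nat \<Rightarrow> nat) \<Rightarrow> (nat \<Rightarrow> nat)" where
  "gneg N k x = (\<lambda>j. if j < k then (N j - x j) mod N j else 0)"

definition gsub :: "(nat \<Rightarrow> nat) \<Rightarrow> nat \<Rightarrow> (nat \<Rightarrow> nat) \<Rightarrow> (nat \<Rightarrow> nat) \<Rightarrow> (nat \<Rightarrow> nat)" where
  "gsub N k x y = gadd N k x (gneg N k y)"

definition is_subgroup :: "(nat \<Rightarrow> nat) \<Rightarrow> nat \<Rightarrow> (nat \<Rightarrow> nat) set \<Rightarrow> bool" where
  "is_subgroup N k H \<longleftrightarrow> H \<subseteq> grp N k \<and> gzero \<in> H \<and>
     (\<forall>x\<in>H. \<forall>y\<in>H. gadd N k x y \<in> H) \<and> (\<forall>x\<in>H. gneg N k x \<in> H)"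

definition gspan :: "(nat \<Rightarrow> nat) \<Rightarrow> nat \<Rightarrow> (nat \<Rightarrow> nat) set \<Rightarrow> (nat \<Rightarrow> nat) set" where
  "gspan N k T = \<Inter>{H. is_subgroup N k H \<and> T \<subseteq> H}"

definition grank :: "(nat \<Rightarrow> nat) \<Rightarrow> nat \<Rightarrow> nat" where
  "grank N k = (LEAST n. \<exists>T. T \<subseteq> grp N k \<and> finite T \<and> card T = n \<and> gspan N k T = grp N k)"

text \<open>len(H) for a finite abelian group H: length of a composition series,
  i.e. the number of prime factors of the order |H| counted with multiplicity.\<close>
definition glen :: "'a set \<Rightarrow> nat" where
  "glen H = (\<Sum>p\<in>prime_factors (card H). multiplicity p (card H))"

text \<open>Bilinear form: <x,y> = sum_j x_j y_j / N_j (mod 1); "= 0" means the sum is an integer.\<close>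
definition pairing :: "(nat \<Rightarrow> nat) \<Rightarrow> nat \<Rightarrow> (nat \<Rightarrow> nat) \<Rightarrow> (nat \<Rightarrow> nat) \<Rightarrow> real" where
  "pairing N k x y = (\<Sum>j<k. real (x j * y j) / real (N j))"

definition pairing_zero :: "(nat \<Rightarrow> nat) \<Rightarrow> nat \<Rightarrow> (nat \<Rightarrow> nat) \<Rightarrow> (nat \<Rightarrow> nat) \<Rightarrow> bool" where
  "pairing_zero N k x y \<longleftrightarrow> pairing N k x y \<in> \<int>"

type_synonym state = "(nat \<Rightarrow> nat) \<Rightarrow> (nat \<Rightarrow> nat) \<Rightarrow> complex"

definition qft_entry :: "(nat \<Rightarrow> nat) \<Rightarrow> nat \<Rightarrow> (nat \<Rightarrow> nat) \<Rightarrow> (nat \<Rightarrow> nat) \<Rightarrow> complex" where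
  "qft_entry N k y x = (\<Prod>j<k. cis (2 * pi * real (x j * y j) / real (N j))
                                   / complex_of_real (sqrt (real (N j))))"

text \<open>Apply M (x) I_G where M y x is the matrix entry <y|M|x>.\<close>
definition apply_first :: "(nat \<Rightarrow> nat) \<Rightarrow> nat \<Rightarrow> ((nat \<Rightarrow> nat) \<Rightarrow> (nat \<Rightarrow> nat) \<Rightarrow> complex) \<Rightarrow> state \<Rightarrow> state" where
  "apply_first N k M \<psi> = (\<lambda>y b. \<Sum>x\<in>grp N k. M y x * \<psi> x b)"

definition QFT_I :: "(nat \<Rightarrow> nat) \<Rightarrow> nat \<Rightarrow> state \<Rightarrow> state" where
  "QFT_I N k = apply_first N k (qft_entry N k)"

text \<open><y|QFT^dagger|x> = conjugate of <x|QFT|y>.\<close>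
definition QFTdag_I :: "(nat \<Rightarrow> nat) \<Rightarrow> nat \<Rightarrow> state \<Rightarrow> state" where
  "QFTdag_I N k = apply_first N k (\<lambda>y x. cnj (qft_entry N k x y))"

text \<open>U_f |g>|b> = |g>|b + f(g)>.\<close>
definition Uf :: "(nat \<Rightarrow> nat) \<Rightarrow> nat \<Rightarrow> ((nat \<Rightarrow> nat) \<Rightarrow> (nat \<Rightarrow> nat)) \<Rightarrow> state \<Rightarrow> state" where
  "Uf N k f \<psi> = (\<lambda>g c. \<Sum>b\<in>grp N k. if gadd N k b (f g) = c then \<psi> g b else 0)"

definition init_state :: state where
  "init_state = (\<lambda>g b. if g = gzero \<and> b = gzero then 1 else 0)"

definition final_state :: "(nat \<Rightarrow> nat) \<Rightarrow> nat \<Rightarrow> ((nat \<Rightarrow> nat) \<Rightarrow> (nat \<Rightarrow> nat)) \<Rightarrow> state" where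
  "final_state N k f = QFTdag_I N k (Uf N k f (QFT_I N k init_state))"

text \<open>Born rule: probability of outcome t when measuring the first k registers.\<close>
definition outcome_prob :: "(nat \<Rightarrow> nat) \<Rightarrow> nat \<Rightarrow> ((nat \<Rightarrow> nat) \<Rightarrow> (nat \<Rightarrow> nat)) \<Rightarrow> (nat \<Rightarrow> nat) \<Rightarrow> real" where
  "outcome_prob N k f t = (\<Sum>b\<in>grp N k. (cmod (final_state N k f t b))\<^sup>2)"

definition output_set :: "(nat \<Rightarrow> nat) \<Rightarrow> nat \<Rightarrow> (nat \<Rightarrow> nat) set \<Rightarrow> (nat \<Rightarrow> nat) set" where
  "output_set N k T = {x\<in>grp N k. \<forall>t\<in>T. pairing_zero N k t x}"

definition prob_success :: "(nat \<Rightarrow> nat) \<Rightarrow> nat \<Rightarrow> ((nat \<Rightarrow> nat) \<Rightarrow> (nat \<Rightarrow> nat)) \<Rightarrow> nat \<Rightarrow> (nat \<Rightarrow> nat) set \<Rightarrow> real" where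
  "prob_success N k f h K =
     (\<Sum>ts\<in>{ts. length ts = h \<and> set ts \<subseteq> grp N k}.
        if output_set N k (set ts) = K then prod_list (map (outcome_prob N k f) ts) else 0)"

end

theory Submission
  imports Defs "HOL-Library.FuncSet" "HOL-Algebra.Coset"
begin

(*
  A measurement returns t with probability 1/|H| if t lies in H = perp K and 0 otherwise, so the
  h outcomes form a uniformly random tuple over H, and the output perp T always contains K.
  If perp T is strictly larger than K, it contains some y outside K with p y in K for a prime p,
  and the p - 1 classes a y + K (0 < a < p) lie in B_p - K, where B_p = {x. p x in K}
  (smul_preimage p) is the annihilator of pH and so has |K| |H[p]| elements. Every x in B_p - K
  is orthogonal to exactly |H| / p elements of H, so a union bound over these x bounds the
  failure probability by the sum over primes p of (|H[p]| - 1) / ((p - 1) p^h) (failure_sum).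
  Finally |H[p]| = p^(a_p) where a_p is at most the rank of G and p^(a_p) divides |H|, and
  elementary estimates bound that sum by epsilon under either hypothesis on h.
*)

lemma sum_inverse_pronic:
  assumes "1 \<le> M"
  shows "(\<Sum>n\<in>{2..M}. 1 / ((real n - 1) * real n)) = 1 - 1 / real M"
  using assms
proof (induction M rule: dec_induct)
  case (step M)
  have "{2..Suc M} = insert (Suc M) {2..M}" using step by auto
  moreover have "1 / ((real (Suc M) - 1) * real (Suc M)) = 1 / real M - 1 / real (Suc M)"
    using step(1) by (simp add: field_simps)
  ultimately show ?case using step by simp
qed simp

lemma sum_inverse_pronic_le_1:
  assumes "finite P" and "\<forall>p\<in>P. 2 \<le> p"
  shows "(\<Sum>p\<in>P. 1 / ((real p - 1) * real p)) \<le> 1"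
proof -
  define M where "M = Max (insert 1 P)"
  have "P \<subseteq> {2..M}" using assms by (auto simp: M_def)
  then have "(\<Sum>p\<in>P. 1 / ((real p - 1) * real p)) \<le> (\<Sum>n\<in>{2..M}. 1 / ((real n - 1) * real n))"
    by (intro sum_mono2) auto
  also have "\<dots> = 1 - 1 / real M" using assms by (intro sum_inverse_pronic) (simp add: M_def)
  also have "\<dots> \<le> 1" by simp
  finally show ?thesis .
qed

lemma sum_power2_minus_1_le:
  assumes "finite S"
  shows "(\<Sum>i\<in>S. (2::real) ^ e i - 1) \<le> 2 ^ (\<Sum>i\<in>S. e i) - 1"
  using assms
proof (induction S rule: finite_induct)
  case (insert x S)
  have "(1::real) \<le> 2 ^ e x" "(1::real) \<le> 2 ^ (\<Sum>i\<in>S. e i)" by simp_all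
  then have "0 \<le> ((2::real) ^ e x - 1) * (2 ^ (\<Sum>i\<in>S. e i) - 1)" by simp
  then show ?case using insert by (simp add: power_add algebra_simps)
qed simp

lemma power2_ge_if_ceiling_log_le:
  assumes "\<lceil>log 2 c\<rceil> \<le> int d" and "0 < c"
  shows "c \<le> 2 ^ d"
proof -
  have "log 2 c \<le> real d" using assms(1) by linarith
  then show ?thesis using assms(2) by (simp add: log_le_iff powr_realpow)
qed

definition failure_sum :: "nat set \<Rightarrow> (nat \<Rightarrow> nat) \<Rightarrow> nat \<Rightarrow> real" where
  "failure_sum P a h = (\<Sum>p\<in>P. (real p ^ a p - 1) / ((real p - 1) * real p ^ h))"

lemma failure_sum_le_rank:
  assumes P: "finite P" "\<forall>p\<in>P. 2 \<le> p" and a: "\<forall>p\<in>P. a p \<le> r"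
    and \<epsilon>: "0 < \<epsilon>" "\<epsilon> < 2" and h: "int r + \<lceil>log 2 (2 / \<epsilon>)\<rceil> \<le> int h"
  shows "failure_sum P a h \<le> \<epsilon>"
proof -
  have "1 \<le> \<lceil>log 2 (2 / \<epsilon>)\<rceil>" using \<epsilon> by (simp add: field_simps)
  then have "Suc r \<le> h" using h by linarith
  then obtain d where d: "h = r + Suc d" "\<lceil>log 2 (2 / \<epsilon>)\<rceil> \<le> int (Suc d)"
    using h by (intro that[of "h - Suc r"]) auto
  have term_le: "(real p ^ a p - 1) / ((real p - 1) * real p ^ h)
      \<le> 1 / ((real p - 1) * real p) * (1 / 2 ^ d)" if p: "p \<in> P" for p
  proof -
    have p2: "2 \<le> real p" using P p by auto
    have "real p ^ a p \<le> real p ^ r" using a p p2 by (intro power_increasing) auto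
    then have "real p ^ a p - 1 \<le> real p ^ r" by linarith
    then have "(real p ^ a p - 1) / ((real p - 1) * real p ^ h)
        \<le> real p ^ r / ((real p - 1) * real p ^ h)"
      using p2 by (intro divide_right_mono) auto
    also have "\<dots> = 1 / ((real p - 1) * real p) * (1 / real p ^ d)"
      using p2 by (simp add: d(1) power_add)
    also have "\<dots> \<le> 1 / ((real p - 1) * real p) * (1 / 2 ^ d)"
      using p2 by (intro mult_left_mono divide_left_mono power_mono) auto
    finally show ?thesis .
  qed
  have "failure_sum P a h \<le> (\<Sum>p\<in>P. 1 / ((real p - 1) * real p)) * (1 / 2 ^ d)"
    unfolding failure_sum_def sum_distrib_right using term_le by (rule sum_mono)
  also have "\<dots> \<le> 1 / 2 ^ d"
    using sum_inverse_pronic_le_1[OF P] by (simp add: divide_right_mono)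
  also have "\<dots> \<le> \<epsilon>"
    using power2_ge_if_ceiling_log_le[OF d(2)] \<epsilon>(1) by (simp add: field_simps)
  finally show ?thesis .
qed

lemma geometric_sum_div_power:
  fixes x :: real
  assumes "1 < x" and "a \<le> h"
  shows "(x ^ a - 1) / ((x - 1) * x ^ h) = (\<Sum>i<a. 1 / x ^ (h - i))"
proof -
  have "(x ^ a - 1) / ((x - 1) * x ^ h) = (\<Sum>i<a. x ^ i) / x ^ h"
    using assms(1) by (simp add: geometric_sum)
  also have "\<dots> = (\<Sum>i<a. 1 / x ^ (h - i))"
    unfolding sum_divide_distrib using assms by (intro sum.cong refl) (simp add: power_diff)
  finally show ?thesis .
qed

lemma failure_term_le_power2:
  assumes "2 \<le> p" and "a \<le> h"
  shows "(real p ^ a - 1) / ((real p - 1) * real p ^ h) \<le> (2 ^ a - 1) / 2 ^ h"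
proof -
  have "(real p ^ a - 1) / ((real p - 1) * real p ^ h) = (\<Sum>i<a. 1 / real p ^ (h - i))"
    using assms by (intro geometric_sum_div_power) auto
  also have "\<dots> \<le> (\<Sum>i<a. 1 / 2 ^ (h - i))"
    using assms by (intro sum_mono divide_left_mono power_mono) auto
  also have "\<dots> = (2 ^ a - 1) / 2 ^ h"
    using geometric_sum_div_power[of 2 a h] assms by simp
  finally show ?thesis .
qed

lemma sum_prime_factors_multiplicity:
  "(\<Sum>p\<in>prime_factors n. multiplicity p n) = size (prime_factorization n)"
  unfolding size_multiset_overloaded_eq
  by (intro sum.cong refl) (simp add: count_prime_factorization_prime in_prime_factors_imp_prime)

lemma glen_eq_size_prime_factorization: "glen A = size (prime_factorization (card A))"
  unfolding glen_def sum_prime_factors_multiplicity ..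

lemma sum_multiplicity_le_size_prime_factorization:
  assumes P: "finite P" "\<forall>p\<in>P. prime p" and n: "0 < n"
  shows "(\<Sum>p\<in>P. multiplicity p n) \<le> size (prime_factorization n)"
proof -
  have "(\<Sum>p\<in>P. multiplicity p n) = (\<Sum>p\<in>P \<inter> prime_factors n. multiplicity p n)"
    using P n by (intro sum.mono_neutral_right) (auto simp: prime_factors_multiplicity)
  also have "\<dots> \<le> (\<Sum>p\<in>prime_factors n. multiplicity p n)"
    by (rule sum_mono2) auto
  finally show ?thesis unfolding sum_prime_factors_multiplicity .
qed

lemma failure_sum_le_length:
  assumes P: "finite P" "\<forall>p\<in>P. prime p" and a: "\<forall>p\<in>P. p ^ a p dvd n" and n: "0 < n"
    and \<epsilon>: "0 < \<epsilon>" "\<epsilon> \<le> 1"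
    and h: "int (size (prime_factorization n)) + \<lceil>log 2 (1 / \<epsilon>)\<rceil> \<le> int h"
  shows "failure_sum P a h \<le> \<epsilon>"
proof -
  define L where "L = size (prime_factorization n)"
  have "0 \<le> log 2 (1 / \<epsilon>)" using \<epsilon> by (simp add: field_simps)
  then have "0 \<le> \<lceil>log 2 (1 / \<epsilon>)\<rceil>" by linarith
  then have "L \<le> h" using h[folded L_def] by linarith
  then obtain d where d: "h = L + d" "\<lceil>log 2 (1 / \<epsilon>)\<rceil> \<le> int d"
    using h[folded L_def] by (intro that[of "h - L"]) auto
  have sum_a: "(\<Sum>p\<in>P. a p) \<le> L"
  proof -
    have "(\<Sum>p\<in>P. a p) \<le> (\<Sum>p\<in>P. multiplicity p n)"
      using P a n by (intro sum_mono multiplicity_geI) (auto simp: prime_gt_1_nat)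
    then show ?thesis
      unfolding L_def using sum_multiplicity_le_size_prime_factorization[OF P n] by linarith
  qed
  have "failure_sum P a h \<le> (\<Sum>p\<in>P. (2 ^ a p - 1) / 2 ^ h)"
    unfolding failure_sum_def
  proof (rule sum_mono)
    fix p assume p: "p \<in> P"
    have "a p \<le> h" using member_le_sum[OF p, of a] P(1) sum_a d(1) by simp
    then show "(real p ^ a p - 1) / ((real p - 1) * real p ^ h) \<le> (2 ^ a p - 1) / 2 ^ h"
      using P p by (intro failure_term_le_power2) (auto simp: prime_ge_2_nat)
  qed
  also have "\<dots> \<le> (2 ^ (\<Sum>p\<in>P. a p) - 1) / 2 ^ h"
    unfolding sum_divide_distrib[symmetric] using sum_power2_minus_1_le[OF P(1)]
    by (intro divide_right_mono) auto
  also have "\<dots> \<le> 2 ^ L / 2 ^ h"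
  proof -
    have "(2::real) ^ (\<Sum>p\<in>P. a p) \<le> 2 ^ L" using sum_a by (intro power_increasing) auto
    then have "(2::real) ^ (\<Sum>p\<in>P. a p) - 1 \<le> 2 ^ L" by linarith
    then show ?thesis by (rule divide_right_mono) simp
  qed
  also have "\<dots> = 1 / 2 ^ d" by (simp add: d(1) power_add)
  also have "\<dots> \<le> \<epsilon>"
    using power2_ge_if_ceiling_log_le[OF d(2)] \<epsilon> by (simp add: field_simps)
  finally show ?thesis .
qed

lemma cis_2pi_mult_mod:
  assumes "0 < (n::nat)"
  shows "cis (2 * pi * real ((a mod n) * y) / real n) = cis (2 * pi * real (a * y) / real n)"
proof -
  have "real (a * y) = real ((a mod n) * y) + real n * real ((a div n) * y)"
    by (metis of_nat_add of_nat_mult mod_mult_div_eq add.commute add_mult_distrib mult.assoc)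
  then have "2 * pi * real (a * y) / real n
      = 2 * pi * real ((a mod n) * y) / real n + 2 * pi * real ((a div n) * y)"
    using assms by (simp add: field_simps)
  then show ?thesis by (simp add: cis_mult[symmetric])
qed

lemma prod_cis: "finite A \<Longrightarrow> (\<Prod>j\<in>A. cis (g j)) = cis (\<Sum>j\<in>A. g j)"
  by (induction A rule: finite_induct) (auto simp: cis_mult)

lemma cis_2pi_eq_1_iff: "cis (2 * pi * r) = 1 \<longleftrightarrow> r \<in> \<int>"
proof
  assume "cis (2 * pi * r) = 1"
  then have "cos (2 * pi * r) = 1" by (metis cis.simps(1) one_complex.simps(1))
  then obtain n where "2 * pi * r = real_of_int n * 2 * pi" using cos_one_2pi_int by blast
  then show "r \<in> \<int>" by simp
qed simp

lemma card_eq_card_image_mult_fibre: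
  assumes "finite A" and "\<And>y. y \<in> g ` A \<Longrightarrow> card {x\<in>A. g x = y} = c"
  shows "card A = card (g ` A) * c"
proof -
  have "A = (\<Union>y\<in>g ` A. {x\<in>A. g x = y})" by auto
  also have "card \<dots> = (\<Sum>y\<in>g ` A. card {x\<in>A. g x = y})"
    by (rule card_UN_disjoint) (use assms(1) in auto)
  finally show ?thesis using assms(2) by simp
qed

lemma sum_mod_mult_left:
  "(\<Sum>t\<in>T. (c t mod m) * x t) mod m = (\<Sum>t\<in>T. c t * x t) mod (m::int)"
  by (subst (1 2) mod_sum_eq[symmetric]) (simp add: mod_mult_left_eq)

lemma prod_sqrt: "finite A \<Longrightarrow> (\<Prod>j\<in>A. sqrt (g j)) = sqrt (\<Prod>j\<in>A. g j)"
  by (induction A rule: finite_induct) (auto simp: real_sqrt_mult)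

section \<open>The group and its characters\<close>

definition coord_prod :: "nat \<Rightarrow> (nat \<Rightarrow> nat set) \<Rightarrow> (nat \<Rightarrow> nat) set" where
  "coord_prod k A = {x. (\<forall>j<k. x j \<in> A j) \<and> (\<forall>j\<ge>k. x j = 0)}"

lemma bij_betw_coord_prod_PiE:
  "bij_betw (\<lambda>x. restrict x {..<k}) (coord_prod k A) (PiE {..<k} A)"
proof (rule bij_betw_byWitness[where f' = "\<lambda>g j. if j < k then g j else 0"])
  show "\<forall>x\<in>coord_prod k A. (\<lambda>j. if j < k then restrict x {..<k} j else 0) = x"
    by (auto simp: coord_prod_def fun_eq_iff)
qed (auto simp: coord_prod_def PiE_def extensional_def)

lemma
  assumes "\<forall>j<k. finite (A j)"
  shows finite_coord_prod: "finite (coord_prod k A)"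
    and card_coord_prod: "card (coord_prod k A) = (\<Prod>j<k. card (A j))"
proof -
  have "finite (PiE {..<k} A)" using assms by (intro finite_PiE) auto
  then show "finite (coord_prod k A)"
    using bij_betw_finite[OF bij_betw_coord_prod_PiE] by blast
  show "card (coord_prod k A) = (\<Prod>j<k. card (A j))"
    using bij_betw_same_card[OF bij_betw_coord_prod_PiE] by (simp add: card_PiE)
qed

lemma card_torsion_mod:
  fixes p n :: nat
  assumes p: "prime p" and n: "0 < n"
  shows "card {i. i < n \<and> n dvd p * i} = (if p dvd n then p else 1)"
proof (cases "p dvd n")
  case True
  then obtain m where m: "n = p * m" by blast
  have p0: "0 < p" using p prime_gt_0_nat by blast
  then have m0: "0 < m" using m n by simp
  have "{i. i < n \<and> n dvd p * i} = (\<lambda>c. c * m) ` {..<p}"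
  proof (intro equalityI subsetI)
    fix i assume "i \<in> {i. i < n \<and> n dvd p * i}"
    then have i: "i < p * m" "m dvd i" using m p0 by auto
    then obtain c where "i = c * m" by (auto elim: dvdE simp: mult.commute)
    with i(1) m0 show "i \<in> (\<lambda>c. c * m) ` {..<p}" by (auto simp: mult.commute)
  qed (use m m0 in \<open>auto simp: mult.commute\<close>)
  moreover have "inj_on (\<lambda>c. c * m) {..<p}" using m0 by (intro inj_onI) simp
  ultimately show ?thesis using True by (simp add: card_image)
next
  case False
  then have "coprime n p" using p by (metis prime_imp_coprime coprime_commute)
  then have "{i. i < n \<and> n dvd p * i} = {0}"
    using n by (auto simp: coprime_dvd_mult_right_iff dest: nat_dvd_not_less)
  then show ?thesis using False by simp
qed

locale cyclic_sum =
  fixes N :: "nat \<Rightarrow> nat" and k :: nat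
  assumes N_pos: "\<And>j. j < k \<Longrightarrow> 0 < N j"
begin

abbreviation "G \<equiv> grp N k"
abbreviation "add \<equiv> gadd N k"
abbreviation "neg \<equiv> gneg N k"
abbreviation "subgrp S \<equiv> is_subgroup N k S"

lemma grp_eq_coord_prod: "G = coord_prod k (\<lambda>j. {..<N j})"
  unfolding grp_def coord_prod_def by auto

lemma finite_grp: "finite G" and card_grp: "card G = (\<Prod>j<k. N j)"
  unfolding grp_eq_coord_prod by (simp_all add: finite_coord_prod card_coord_prod)

lemma zero_in_grp [simp]: "gzero \<in> G"
  unfolding grp_def gzero_def using N_pos by auto

lemma add_in_grp [simp]: "add x y \<in> G"
  unfolding grp_def gadd_def using N_pos by auto

lemma neg_in_grp [simp]: "neg x \<in> G"
  unfolding grp_def gneg_def using N_pos by auto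

lemma add_comm: "add x y = add y x"
  unfolding gadd_def by (auto simp: add.commute)

lemma add_assoc: "add (add x y) z = add x (add y z)"
  unfolding gadd_def by (auto simp: mod_add_left_eq mod_add_right_eq add.assoc)

lemma add_left_commute: "add x (add y z) = add y (add x z)"
  by (metis add_assoc add_comm)

lemmas add_ac = add_assoc add_comm add_left_commute

lemma add_zero [simp]: "x \<in> G \<Longrightarrow> add x gzero = x"
  and zero_add [simp]: "x \<in> G \<Longrightarrow> add gzero x = x"
  unfolding gadd_def gzero_def grp_def by auto

lemma add_neg [simp]: "x \<in> G \<Longrightarrow> add x (neg x) = gzero"
  unfolding gadd_def gneg_def gzero_def grp_def
  by (auto simp: fun_eq_iff mod_add_right_eq)

lemma neg_add [simp]: "x \<in> G \<Longrightarrow> add (neg x) x = gzero"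
  using add_neg add_comm by metis

lemma neg_add_cancel [simp]: "c \<in> G \<Longrightarrow> x \<in> G \<Longrightarrow> add (neg c) (add c x) = x"
  and add_neg_cancel [simp]: "c \<in> G \<Longrightarrow> x \<in> G \<Longrightarrow> add c (add (neg c) x) = x"
  by (simp_all add: add_assoc[symmetric])

lemma add_left_cancel:
  assumes "x \<in> G" "y \<in> G" "c \<in> G" "add c x = add c y" shows "x = y"
  by (metis assms neg_add_cancel)

lemma neg_unique:
  assumes "x \<in> G" "y \<in> G" "add x y = gzero" shows "y = neg x"
  by (metis assms add_left_cancel add_neg neg_in_grp)

lemma neg_zero [simp]: "neg gzero = gzero"
  using neg_unique[of gzero gzero] by simp

lemma inj_on_add: "c \<in> G \<Longrightarrow> S \<subseteq> G \<Longrightarrow> inj_on (add c) S"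
  by (intro inj_onI) (auto intro: add_left_cancel)

lemma subgrp_subset: "subgrp S \<Longrightarrow> S \<subseteq> G" and subgrp_zero: "subgrp S \<Longrightarrow> gzero \<in> S"
  and subgrp_add: "subgrp S \<Longrightarrow> x \<in> S \<Longrightarrow> y \<in> S \<Longrightarrow> add x y \<in> S"
  and subgrp_neg: "subgrp S \<Longrightarrow> x \<in> S \<Longrightarrow> neg x \<in> S"
  unfolding is_subgroup_def by auto

lemma subgrp_finite: "subgrp S \<Longrightarrow> finite S"
  using subgrp_subset finite_grp finite_subset by blast

lemma card_subgrp_pos: "subgrp S \<Longrightarrow> 0 < card S"
  using subgrp_finite subgrp_zero card_gt_0_iff by blast

lemma subgrp_grp: "subgrp G"
  unfolding is_subgroup_def by auto

definition grp_monoid :: "(nat \<Rightarrow> nat) monoid" where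
  "grp_monoid = \<lparr>carrier = G, mult = add, one = gzero\<rparr>"

lemma comm_group_grp_monoid: "comm_group grp_monoid"
  by (rule comm_groupI) (auto simp: grp_monoid_def add_ac, use neg_in_grp add_neg in blast)

lemma subgroup_grp_monoid_iff: "subgroup S grp_monoid \<longleftrightarrow> subgrp S"
proof -
  interpret comm_group grp_monoid by (rule comm_group_grp_monoid)
  have "inv\<^bsub>grp_monoid\<^esub> x = neg x" if "x \<in> G" for x
    using that by (intro inv_equality) (auto simp: grp_monoid_def)
  then show ?thesis
    unfolding subgroup_def is_subgroup_def by (auto simp: grp_monoid_def) (metis subsetD)+
qed

lemma card_subgrp_dvd:
  assumes "subgrp S" "subgrp T" "S \<subseteq> T"
  shows "card S dvd card T"
proof -
  interpret comm_group grp_monoid by (rule comm_group_grp_monoid)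
  have T: "subgroup T grp_monoid" and S: "subgroup S (grp_monoid\<lparr>carrier := T\<rparr>)"
    using assms subgroup_incl by (auto simp: subgroup_grp_monoid_iff)
  interpret T: group "grp_monoid\<lparr>carrier := T\<rparr>" using subgroup.subgroup_is_group[OF T] by blast
  show ?thesis using T.lagrange[OF S] by (simp add: order_def) (metis dvd_triv_right)
qed

primrec smul :: "nat \<Rightarrow> (nat \<Rightarrow> nat) \<Rightarrow> (nat \<Rightarrow> nat)" where
  "smul 0 x = gzero"
| "smul (Suc n) x = add x (smul n x)"

lemma smul_in_grp [simp]: "smul n x \<in> G"
  by (cases n) auto

lemma smul_eq: "smul n x = (\<lambda>j. if j < k then (n * x j) mod N j else 0)"
  by (induction n) (auto simp: gzero_def gadd_def mod_add_right_eq)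

lemma smul_add_nat: "smul (m + n) x = add (smul m x) (smul n x)"
  by (induction m) (auto simp: add_assoc)

lemma smul_add: "smul n (add x y) = add (smul n x) (smul n y)"
  by (induction n) (auto simp: add_ac)

lemma smul_mult: "smul (m * n) x = smul m (smul n x)"
  by (induction m) (auto simp: smul_add_nat)

lemma smul_commute: "smul m (smul n x) = smul n (smul m x)"
  by (metis smul_mult mult.commute)

lemma smul_zero [simp]: "smul n gzero = gzero"
  by (induction n) auto

lemma smul_neg: "x \<in> G \<Longrightarrow> smul n (neg x) = neg (smul n x)"
  by (rule neg_unique) (auto simp: smul_add[symmetric])

lemma smul_card_grp [simp]: "smul (card G) x = gzero"
proof -
  have "N j dvd card G" if "j < k" for j
    unfolding card_grp using that by (intro dvd_prodI) auto
  then show ?thesis unfolding smul_eq gzero_def by auto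
qed

lemma subgrp_smul: "subgrp S \<Longrightarrow> x \<in> S \<Longrightarrow> smul n x \<in> S"
  by (induction n) (auto intro: subgrp_zero subgrp_add)

lemma subgrp_smul_image:
  assumes S: "subgrp S" shows "subgrp (smul p ` S)"
  unfolding is_subgroup_def
proof (intro conjI ballI)
  show "smul p ` S \<subseteq> G" "gzero \<in> smul p ` S"
    using subgrp_zero[OF S] by (auto intro: image_eqI[of _ _ gzero])
next
  fix u v assume "u \<in> smul p ` S" "v \<in> smul p ` S"
  then obtain x y where "x \<in> S" "y \<in> S" "u = smul p x" "v = smul p y" by blast
  then show "add u v \<in> smul p ` S" "neg u \<in> smul p ` S"
    using subgrp_add[OF S] subgrp_neg[OF S] subgrp_subset[OF S]
    by (auto simp: smul_add[symmetric] smul_neg[symmetric] intro!: imageI)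
qed

definition chi :: "(nat \<Rightarrow> nat) \<Rightarrow> (nat \<Rightarrow> nat) \<Rightarrow> complex" where
  "chi x y = (\<Prod>j<k. cis (2 * pi * real (x j * y j) / real (N j)))"

lemma chi_commute: "chi x y = chi y x"
  unfolding chi_def by (simp add: mult.commute)

lemma chi_eq_cis_pairing: "chi x y = cis (2 * pi * pairing N k x y)"
  unfolding chi_def pairing_def by (simp add: prod_cis sum_distrib_left)

lemma pairing_zero_iff_chi: "pairing_zero N k x y \<longleftrightarrow> chi x y = 1"
  unfolding pairing_zero_def chi_eq_cis_pairing cis_2pi_eq_1_iff ..

lemma norm_chi [simp]: "norm (chi x y) = 1"
  unfolding chi_eq_cis_pairing by simp

lemma chi_add_left: "chi (add a b) y = chi a y * chi b y"
proof -
  have "chi (add a b) y = (\<Prod>j<k. cis (2 * pi * real ((a j + b j) * y j) / real (N j)))"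
    unfolding chi_def gadd_def using cis_2pi_mult_mod[OF N_pos] by (intro prod.cong) auto
  also have "\<dots> = chi a y * chi b y"
    unfolding chi_def prod.distrib[symmetric]
    by (intro prod.cong) (auto simp: cis_mult algebra_simps add_divide_distrib)
  finally show ?thesis .
qed

lemma chi_add_right: "chi y (add a b) = chi y a * chi y b"
  using chi_add_left chi_commute by metis

lemma chi_zero_left [simp]: "chi gzero y = 1" and chi_zero_right [simp]: "chi y gzero = 1"
  unfolding chi_def gzero_def by auto

lemma chi_smul_left: "chi (smul n x) y = chi x y ^ n"
  by (induction n) (auto simp: chi_add_left)

lemma chi_smul_right: "chi y (smul n x) = chi y x ^ n"
  using chi_smul_left chi_commute by metis

lemma chi_neg_right: "x \<in> G \<Longrightarrow> chi y (neg x) * chi y x = 1"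
  by (metis chi_add_right chi_zero_right neg_add)

definition perp :: "(nat \<Rightarrow> nat) set \<Rightarrow> (nat \<Rightarrow> nat) set" where
  "perp S = {y \<in> G. \<forall>s\<in>S. chi s y = 1}"

lemma output_set_eq_perp: "output_set N k T = perp T"
  unfolding output_set_def perp_def pairing_zero_iff_chi ..

lemma perp_subset: "perp S \<subseteq> G"
  unfolding perp_def by auto

lemma perp_antimono: "S \<subseteq> T \<Longrightarrow> perp T \<subseteq> perp S"
  unfolding perp_def by auto

lemma subgrp_perp: "subgrp (perp S)"
  unfolding is_subgroup_def perp_def
  by (auto simp: chi_add_right) (metis chi_neg_right mult_1_right)

lemma sum_chi_subgrp:
  assumes S: "subgrp S"
  shows "(\<Sum>s\<in>S. chi s y) = (if \<forall>s\<in>S. chi s y = 1 then of_nat (card S) else 0)"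
proof (cases "\<forall>s\<in>S. chi s y = 1")
  case False
  then obtain s0 where s0: "s0 \<in> S" "chi s0 y \<noteq> 1" by blast
  have SG: "S \<subseteq> G" using subgrp_subset[OF S] .
  have inj: "inj_on (add s0) S" using SG s0 by (intro inj_on_add) auto
  have "add s0 ` S = S"
    using endo_inj_surj[OF subgrp_finite[OF S] _ inj] subgrp_add[OF S s0(1)] by blast
  then have "(\<Sum>s\<in>S. chi s y) = (\<Sum>s\<in>S. chi (add s0 s) y)"
    using sum.reindex[OF inj, of "\<lambda>s. chi s y"] by simp
  also have "\<dots> = chi s0 y * (\<Sum>s\<in>S. chi s y)" by (simp add: chi_add_left sum_distrib_left)
  finally have "(1 - chi s0 y) * (\<Sum>s\<in>S. chi s y) = 0" by (simp add: algebra_simps)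
  then show ?thesis using s0 False by auto
qed simp

lemma perp_grp: "perp G = {gzero}"
proof (intro equalityI subsetI)
  fix y assume y: "y \<in> perp G"
  show "y \<in> {gzero}"
  proof (rule ccontr)
    assume "y \<notin> {gzero}"
    then obtain j where j: "y j \<noteq> 0" unfolding gzero_def by auto
    have yG: "y \<in> G" using y perp_subset by auto
    have jk: "j < k" using yG j unfolding grp_def by (auto simp: not_less[symmetric])
    then have yj: "y j < N j" using yG unfolding grp_def by auto
    define e where "e = (\<lambda>i. if i = j then 1 else 0 :: nat)"
    have "e \<in> G" using jk yj j N_pos unfolding e_def grp_def by auto
    have "cis (2 * pi * (real (y j) / real (N j)))
        = (\<Prod>i<k. if i = j then cis (2 * pi * (real (y j) / real (N j))) else 1)"
      using jk by simp
    also have "\<dots> = chi e y" unfolding chi_def e_def by (intro prod.cong) auto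
    also have "\<dots> = 1" using \<open>e \<in> G\<close> y unfolding perp_def by auto
    finally have "real (y j) / real (N j) \<in> \<int>" by (simp only: cis_2pi_eq_1_iff)
    then obtain n where n: "real (y j) / real (N j) = real_of_int n" by (auto elim: Ints_cases)
    have "0 < real (y j) / real (N j)" "real (y j) / real (N j) < 1" using j yj by auto
    then have "0 < n" "n < 1" unfolding n by simp_all
    then show False by linarith
  qed
qed (auto simp: perp_def)

lemma card_mult_card_perp:
  assumes S: "subgrp S"
  shows "card S * card (perp S) = card G"
proof -
  have "(\<Sum>t\<in>G. \<Sum>s\<in>S. chi s t) = (\<Sum>t\<in>G. if t \<in> perp S then of_nat (card S) else 0)"
    by (intro sum.cong refl) (auto simp: sum_chi_subgrp[OF S] perp_def)
  also have "\<dots> = of_nat (card (perp S) * card S)"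
    using perp_subset finite_grp by (simp add: sum.If_cases Int_absorb1)
  finally have 1: "(\<Sum>t\<in>G. \<Sum>s\<in>S. chi s t) = of_nat (card (perp S) * card S)" .
  have "(\<Sum>t\<in>G. \<Sum>s\<in>S. chi s t) = (\<Sum>s\<in>S. \<Sum>t\<in>G. chi t s)"
    by (subst sum.swap) (simp add: chi_commute)
  also have "\<dots> = (\<Sum>s\<in>S. if s = gzero then of_nat (card G) else 0)"
  proof (intro sum.cong refl)
    fix s assume "s \<in> S"
    then have "(\<forall>t\<in>G. chi t s = 1) \<longleftrightarrow> s = gzero"
      using perp_grp subgrp_subset[OF S] unfolding perp_def by blast
    then show "(\<Sum>t\<in>G. chi t s) = (if s = gzero then of_nat (card G) else 0)"
      by (simp add: sum_chi_subgrp[OF subgrp_grp])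
  qed
  also have "\<dots> = of_nat (card G)" using subgrp_finite[OF S] subgrp_zero[OF S] by simp
  finally show ?thesis using 1 by (simp only: of_nat_eq_iff mult.commute)
qed

lemma perp_perp:
  assumes S: "subgrp S"
  shows "perp (perp S) = S"
proof -
  have sub: "S \<subseteq> perp (perp S)"
    using subgrp_subset[OF S] unfolding perp_def by (auto simp: chi_commute)
  have "card (perp S) * card S = card (perp S) * card (perp (perp S))"
    using card_mult_card_perp[OF S] card_mult_card_perp[OF subgrp_perp] by (simp add: mult.commute)
  then have "card S = card (perp (perp S))" using card_subgrp_pos[OF subgrp_perp[of S]] by simp
  then show ?thesis using card_subset_eq[OF subgrp_finite[OF subgrp_perp] sub] by simp
qed

definition torsion :: "nat \<Rightarrow> (nat \<Rightarrow> nat) set \<Rightarrow> (nat \<Rightarrow> nat) set" where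
  "torsion p S = {x\<in>S. smul p x = gzero}"

lemma torsion_subset: "torsion p S \<subseteq> S"
  unfolding torsion_def by auto

lemma torsion_mono: "S \<subseteq> T \<Longrightarrow> torsion p S \<subseteq> torsion p T"
  unfolding torsion_def by auto

lemma subgrp_torsion: "subgrp S \<Longrightarrow> subgrp (torsion p S)"
  unfolding is_subgroup_def torsion_def by (auto simp: smul_add smul_neg)

lemma card_eq_card_smul_image_mult_torsion:
  assumes S: "subgrp S"
  shows "card S = card (smul p ` S) * card (torsion p S)"
proof (rule card_eq_card_image_mult_fibre[OF subgrp_finite[OF S]])
  fix y assume "y \<in> smul p ` S"
  then obtain x0 where x0: "x0 \<in> S" "y = smul p x0" by blast
  have SG: "S \<subseteq> G" and x0G: "x0 \<in> G" using subgrp_subset[OF S] x0 by auto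
  have "{x\<in>S. smul p x = y} = add x0 ` torsion p S"
  proof (intro equalityI subsetI)
    fix x assume x: "x \<in> {x\<in>S. smul p x = y}"
    then have "add (neg x0) x \<in> torsion p S"
      using x0 subgrp_add[OF S] subgrp_neg[OF S] SG
      by (auto simp: torsion_def smul_add smul_neg)
    moreover have "x = add x0 (add (neg x0) x)" using x x0G SG by auto
    ultimately show "x \<in> add x0 ` torsion p S" by blast
  next
    fix x assume "x \<in> add x0 ` torsion p S"
    then show "x \<in> {x\<in>S. smul p x = y}"
      using x0 subgrp_add[OF S] by (auto simp: torsion_def smul_add)
  qed
  moreover have "inj_on (add x0) (torsion p S)"
    using x0G SG torsion_subset by (intro inj_on_add) auto
  ultimately show "card {x\<in>S. smul p x = y} = card (torsion p S)" by (simp add: card_image)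
qed

definition prank :: "nat \<Rightarrow> nat" where
  "prank p = card {j\<in>{..<k}. p dvd N j}"

lemma prod_if_dvd_eq_power_prank: "(\<Prod>j<k. if p dvd N j then p else 1) = p ^ prank p"
  unfolding prank_def by (simp add: prod.If_cases Int_def conj_commute)

lemma card_torsion_grp:
  assumes p: "prime p"
  shows "card (torsion p G) = p ^ prank p"
proof -
  have "torsion p G = coord_prod k (\<lambda>j. {i. i < N j \<and> N j dvd p * i})"
    unfolding torsion_def coord_prod_def grp_def smul_eq gzero_def by (auto simp: fun_eq_iff)
  then have "card (torsion p G) = (\<Prod>j<k. card {i. i < N j \<and> N j dvd p * i})"
    by (simp add: card_coord_prod)
  also have "\<dots> = (\<Prod>j<k. if p dvd N j then p else 1)"
    using card_torsion_mod[OF p N_pos] by simp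
  also have "\<dots> = p ^ prank p" by (rule prod_if_dvd_eq_power_prank)
  finally show ?thesis .
qed

(* On the coordinates j with p dvd N j, each element of the group generated by T is congruent
   mod p to an integer combination of T. The residue_box has p ^ prank p elements, all of them
   such combinations, and at most p ^ card T combinations are distinct mod p. *)
definition mod_p_span :: "nat \<Rightarrow> (nat \<Rightarrow> nat) set \<Rightarrow> (nat \<Rightarrow> nat) set" where
  "mod_p_span p T = {x\<in>G. \<exists>c. \<forall>j<k. p dvd N j \<longrightarrow>
      int (x j) mod int p = (\<Sum>t\<in>T. c t * int (t j)) mod int p}"

lemma add_coord_mod_p:
  assumes "j < k" "p dvd N j"
  shows "int (add x y j) mod int p = (int (x j) mod int p + int (y j) mod int p) mod int p"
proof -
  have "int (add x y j) mod int p = int ((x j + y j) mod N j mod p)"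
    using assms by (simp add: gadd_def of_nat_mod)
  also have "\<dots> = (int (x j) mod int p + int (y j) mod int p) mod int p"
    using assms by (simp add: mod_mod_cancel of_nat_mod mod_add_eq)
  finally show ?thesis .
qed

lemma neg_coord_mod_p:
  assumes "x \<in> G" "j < k" "p dvd N j"
  shows "int (neg x j) mod int p = (- (int (x j) mod int p)) mod int p"
proof -
  have "x j < N j" using assms unfolding grp_def by auto
  have "int (neg x j) mod int p = int ((N j - x j) mod N j mod p)"
    using assms by (simp add: gneg_def of_nat_mod)
  also have "\<dots> = (int (N j) - int (x j)) mod int p"
    using assms \<open>x j < N j\<close> by (simp add: mod_mod_cancel of_nat_mod of_nat_diff)
  also have "\<dots> = (int (N j) mod int p - int (x j) mod int p) mod int p"
    by (simp add: mod_diff_eq)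
  also have "int (N j) mod int p = 0" using assms by (simp add: of_nat_mod[symmetric])
  finally show ?thesis by (simp only: diff_0)
qed

lemma subgrp_mod_p_span: "subgrp (mod_p_span p T)"
  unfolding is_subgroup_def
proof (intro conjI ballI)
  show "mod_p_span p T \<subseteq> G" unfolding mod_p_span_def by auto
  show "gzero \<in> mod_p_span p T"
    using zero_in_grp unfolding mod_p_span_def by (auto simp: gzero_def intro: exI[of _ "\<lambda>_. 0"])
next
  fix x y assume "x \<in> mod_p_span p T" "y \<in> mod_p_span p T"
  then obtain c d where
    c: "\<forall>j<k. p dvd N j \<longrightarrow> int (x j) mod int p = (\<Sum>t\<in>T. c t * int (t j)) mod int p" and
    d: "\<forall>j<k. p dvd N j \<longrightarrow> int (y j) mod int p = (\<Sum>t\<in>T. d t * int (t j)) mod int p"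
    unfolding mod_p_span_def by blast
  have "int (add x y j) mod int p = (\<Sum>t\<in>T. (c t + d t) * int (t j)) mod int p"
    if "j < k" "p dvd N j" for j
    using c d that by (simp add: add_coord_mod_p mod_add_eq distrib_right sum.distrib)
  then show "add x y \<in> mod_p_span p T" unfolding mod_p_span_def by auto
next
  fix x assume x: "x \<in> mod_p_span p T"
  then obtain c where
    c: "\<forall>j<k. p dvd N j \<longrightarrow> int (x j) mod int p = (\<Sum>t\<in>T. c t * int (t j)) mod int p"
    unfolding mod_p_span_def by blast
  have "int (neg x j) mod int p = (\<Sum>t\<in>T. - c t * int (t j)) mod int p"
    if "j < k" "p dvd N j" for j
    using x c that unfolding mod_p_span_def
    by (simp add: neg_coord_mod_p mod_minus_eq sum_negf)
  then show "neg x \<in> mod_p_span p T"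
    unfolding mod_p_span_def by (auto intro!: exI[of _ "\<lambda>t. - c t"])
qed

lemma subset_mod_p_span:
  assumes "finite T" "T \<subseteq> G"
  shows "T \<subseteq> mod_p_span p T"
proof
  fix t assume t: "t \<in> T"
  have "(\<Sum>s\<in>T. (if s = t then 1 else 0) * int (s j)) = (\<Sum>s\<in>T. if s = t then int (t j) else 0)" for j
    by (intro sum.cong) auto
  then have "(\<Sum>s\<in>T. (if s = t then 1 else 0) * int (s j)) = int (t j)" for j
    using t assms(1) by simp
  then show "t \<in> mod_p_span p T"
    unfolding mod_p_span_def using t assms(2)
    by (auto intro!: exI[of _ "\<lambda>s. if s = t then 1 else 0"])
qed

definition residue_box :: "nat \<Rightarrow> (nat \<Rightarrow> nat) set" where
  "residue_box p = coord_prod k (\<lambda>j. if p dvd N j then {..<p} else {0})"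

definition mod_p_combination ::
    "nat \<Rightarrow> (nat \<Rightarrow> nat) set \<Rightarrow> ((nat \<Rightarrow> nat) \<Rightarrow> int) \<Rightarrow> nat \<Rightarrow> nat" where
  "mod_p_combination p T c =
    (\<lambda>j. if j < k \<and> p dvd N j then nat ((\<Sum>t\<in>T. c t * int (t j)) mod int p) else 0)"

lemma card_residue_box: "card (residue_box p) = p ^ prank p"
proof -
  have "card (residue_box p) = (\<Prod>j<k. card (if p dvd N j then {..<p} else {0}))"
    unfolding residue_box_def by (intro card_coord_prod) auto
  also have "\<dots> = p ^ prank p"
    unfolding prod_if_dvd_eq_power_prank[symmetric] by (intro prod.cong) auto
  finally show ?thesis .
qed

lemma residue_box_subset_grp: "residue_box p \<subseteq> G"
proof
  fix z assume z: "z \<in> residue_box p"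
  have "z j < N j" if "j < k" for j
  proof (cases "p dvd N j")
    case True
    then show ?thesis
      using z that dvd_imp_le[OF True N_pos[OF that]] by (auto simp: residue_box_def coord_prod_def)
  qed (use z that N_pos in \<open>auto simp: residue_box_def coord_prod_def\<close>)
  then show "z \<in> G" using z unfolding residue_box_def coord_prod_def grp_def by auto
qed

lemma residue_box_subset_combinations:
  assumes p: "0 < p" and G_span: "G \<subseteq> mod_p_span p T"
  shows "residue_box p \<subseteq> mod_p_combination p T ` PiE T (\<lambda>_. {0..<int p})"
proof
  fix z assume z: "z \<in> residue_box p"
  then obtain c where c: "\<forall>j<k. p dvd N j \<longrightarrow> int (z j) mod int p = (\<Sum>t\<in>T. c t * int (t j)) mod int p"
    using G_span residue_box_subset_grp unfolding mod_p_span_def by blast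
  define c' where "c' = restrict (\<lambda>t. c t mod int p) T"
  have "c' \<in> PiE T (\<lambda>_. {0..<int p})" unfolding c'_def using p by auto
  moreover have "z j = mod_p_combination p T c' j" for j
  proof (cases "j < k \<and> p dvd N j")
    case True
    then have "z j < p" using z unfolding residue_box_def coord_prod_def by auto
    then have "int (z j) = int (z j) mod int p" by simp
    also have "\<dots> = (\<Sum>t\<in>T. c t * int (t j)) mod int p" using c True by blast
    also have "\<dots> = (\<Sum>t\<in>T. (c t mod int p) * int (t j)) mod int p"
      by (rule sum_mod_mult_left[symmetric])
    also have "\<dots> = (\<Sum>t\<in>T. c' t * int (t j)) mod int p"
      unfolding c'_def by (intro arg_cong2[where f = "(mod)"] sum.cong) auto
    finally show ?thesis unfolding mod_p_combination_def using True by simp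
  qed (use z in \<open>cases "j < k"; auto simp: residue_box_def coord_prod_def mod_p_combination_def\<close>)
  ultimately show "z \<in> mod_p_combination p T ` PiE T (\<lambda>_. {0..<int p})" by auto
qed

lemma prank_le_card_generators:
  assumes p: "prime p" and T: "T \<subseteq> G" "finite T" and span: "gspan N k T = G"
  shows "prank p \<le> card T"
proof -
  have "G \<subseteq> mod_p_span p T"
    using span subgrp_mod_p_span subset_mod_p_span[OF T(2,1)] unfolding gspan_def by blast
  then have box: "residue_box p \<subseteq> mod_p_combination p T ` PiE T (\<lambda>_. {0..<int p})"
    using residue_box_subset_combinations prime_gt_0_nat[OF p] by blast
  have fin: "finite (PiE T (\<lambda>_. {0..<int p}))" using T(2) by (simp add: finite_PiE)
  have "p ^ prank p = card (residue_box p)" by (rule card_residue_box[symmetric])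
  also have "\<dots> \<le> card (PiE T (\<lambda>_. {0..<int p}))"
    using card_mono[OF finite_imageI[OF fin] box] card_image_le[OF fin, of "mod_p_combination p T"]
    by linarith
  also have "\<dots> = p ^ card T" using T(2) by (simp add: card_PiE)
  finally show ?thesis using power_le_imp_le_exp[OF prime_gt_1_nat[OF p]] by blast
qed

lemma prank_le_grank:
  assumes "prime p"
  shows "prank p \<le> grank N k"
proof -
  let ?gen = "\<lambda>n. \<exists>T. T \<subseteq> G \<and> finite T \<and> card T = n \<and> gspan N k T = G"
  have "?gen (card G)"
    using finite_grp subgrp_grp unfolding gspan_def by blast
  then have "?gen (grank N k)" unfolding grank_def by (rule LeastI)
  then obtain T where T: "T \<subseteq> G" "finite T" "card T = grank N k" "gspan N k T = G" by blast
  show ?thesis using prank_le_card_generators[OF assms T(1,2,4)] T(3) by simp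
qed

end

section \<open>The subgroup K and bad outcome tuples\<close>

abbreviation tuples :: "'a set \<Rightarrow> nat \<Rightarrow> 'a list set" where
  "tuples A h \<equiv> {ts. set ts \<subseteq> A \<and> length ts = h}"

locale cyclic_sum_subgroup = cyclic_sum +
  fixes K :: "(nat \<Rightarrow> nat) set"
  assumes subgrp_K: "subgrp K"
begin

abbreviation "H \<equiv> perp K"

lemma K_subset: "K \<subseteq> G" and finite_K: "finite K" and card_K_pos: "0 < card K"
  using subgrp_subset subgrp_finite card_subgrp_pos subgrp_K by auto

lemma subgrp_H: "subgrp H" and finite_H: "finite H" and card_H_pos: "0 < card H"
  using subgrp_perp subgrp_finite card_subgrp_pos by auto

lemma perp_H: "perp H = K"
  using perp_perp[OF subgrp_K] .

lemma card_K_mult_card_H: "card K * card H = card G"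
  using card_mult_card_perp[OF subgrp_K] .

lemma chi_H_K: "t \<in> H \<Longrightarrow> x \<in> K \<Longrightarrow> chi t x = 1"
  unfolding perp_def by (auto simp: chi_commute)

lemma K_subset_perp: "T \<subseteq> H \<Longrightarrow> K \<subseteq> perp T"
  using perp_antimono perp_H by blast

definition smul_preimage :: "nat \<Rightarrow> (nat \<Rightarrow> nat) set" where
  "smul_preimage p = {x\<in>G. smul p x \<in> K}"

lemma K_subset_smul_preimage: "K \<subseteq> smul_preimage p"
  unfolding smul_preimage_def using K_subset subgrp_smul[OF subgrp_K] by auto

lemma finite_smul_preimage: "finite (smul_preimage p)"
  unfolding smul_preimage_def using finite_grp by simp

lemma mem_K_iff: "y \<in> K \<longleftrightarrow> y \<in> G \<and> (\<forall>t\<in>H. chi t y = 1)"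
  using perp_H unfolding perp_def[of H] by blast

lemma smul_preimage_eq_perp: "smul_preimage p = perp (smul p ` H)"
  unfolding smul_preimage_def perp_def[of "smul p ` H"] mem_K_iff[of "smul p _"]
  by (auto simp: chi_smul_left chi_smul_right)

lemma card_smul_preimage: "card (smul_preimage p) = card K * card (torsion p H)"
proof -
  have "card (smul p ` H) * card (smul_preimage p) = card K * card H"
    unfolding smul_preimage_eq_perp card_K_mult_card_H
    by (rule card_mult_card_perp[OF subgrp_smul_image[OF subgrp_H]])
  also have "\<dots> = card (smul p ` H) * (card K * card (torsion p H))"
    using card_eq_card_smul_image_mult_torsion[OF subgrp_H] by simp
  finally show ?thesis using card_subgrp_pos[OF subgrp_smul_image[OF subgrp_H, of p]] by simp
qed

lemma card_torsion_H:
  assumes p: "prime p"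
  obtains a where "card (torsion p H) = p ^ a" "a \<le> prank p" "p ^ a dvd card H"
proof -
  have "card (torsion p H) dvd card (torsion p G)"
    by (rule card_subgrp_dvd[OF subgrp_torsion[OF subgrp_H] subgrp_torsion[OF subgrp_grp]
          torsion_mono[OF perp_subset]])
  then have "card (torsion p H) dvd p ^ prank p" using card_torsion_grp[OF p] by simp
  then obtain a where "a \<le> prank p" "card (torsion p H) = p ^ a"
    using divides_primepow_nat[OF p] by auto
  moreover have "card (torsion p H) dvd card H"
    by (rule card_subgrp_dvd[OF subgrp_torsion[OF subgrp_H] subgrp_H torsion_subset])
  ultimately show ?thesis using that by simp
qed

lemma torsion_exponents:
  obtains a where
    "\<And>p. prime p \<Longrightarrow> card (torsion p H) = p ^ a p \<and> a p \<le> prank p \<and> p ^ a p dvd card H"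
proof -
  have "\<forall>p. \<exists>e. prime p \<longrightarrow> card (torsion p H) = p ^ e \<and> e \<le> prank p \<and> p ^ e dvd card H"
  proof
    fix p
    show "\<exists>e. prime p \<longrightarrow> card (torsion p H) = p ^ e \<and> e \<le> prank p \<and> p ^ e dvd card H"
    proof (cases "prime p")
      case True
      then obtain e where "card (torsion p H) = p ^ e" "e \<le> prank p" "p ^ e dvd card H"
        by (rule card_torsion_H)
      then show ?thesis by blast
    qed simp
  qed
  then obtain a where
    "\<forall>p. prime p \<longrightarrow> card (torsion p H) = p ^ a p \<and> a p \<le> prank p \<and> p ^ a p dvd card H"
    by (rule choice[THEN exE])
  then show ?thesis using that by blast
qed

lemma smul_mem_K_iff:
  assumes p: "prime p" and y: "y \<in> G" "y \<notin> K" "smul p y \<in> K" and a: "a < p"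
  shows "smul a y \<in> K \<longleftrightarrow> a = 0"
proof
  assume ay: "smul a y \<in> K"
  show "a = 0"
  proof (rule ccontr)
    assume "a \<noteq> 0"
    then have "\<not> p dvd a" using a by (auto dest: dvd_imp_le)
    then have "coprime a p" using p by (metis coprime_commute prime_imp_coprime)
    then obtain u v where uv: "a * u = p * v + 1"
      using bezout_nat[of a p] \<open>a \<noteq> 0\<close> by (auto simp: coprime_iff_gcd_eq_1)
    have "smul u (smul a y) = smul (v * p + 1) y" by (metis smul_mult mult.commute uv)
    also have "\<dots> = add (smul v (smul p y)) y" using y by (simp add: smul_add_nat smul_mult add_comm)
    finally have "y = add (neg (smul v (smul p y))) (smul u (smul a y))" using y by simp
    also have "\<dots> \<in> K"
      using subgrp_add[OF subgrp_K subgrp_neg[OF subgrp_K subgrp_smul[OF subgrp_K y(3)]]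
          subgrp_smul[OF subgrp_K ay]] .
    finally show False using y(2) by simp
  qed
qed (simp add: subgrp_zero[OF subgrp_K])

lemma card_chi_eq_1:
  assumes p: "prime p" and x: "x \<in> smul_preimage p" "x \<notin> K"
  shows "p * card {t\<in>H. chi t x = 1} = card H"
proof -
  have xG: "x \<in> G" and px: "smul p x \<in> K" using x unfolding smul_preimage_def by auto
  have "(\<Sum>a<p. \<Sum>t\<in>H. chi t (smul a x)) = (\<Sum>a<p. if a = 0 then of_nat (card H) else 0)"
  proof (intro sum.cong refl)
    fix a assume a: "a \<in> {..<p}"
    have "(\<forall>t\<in>H. chi t (smul a x) = 1) \<longleftrightarrow> smul a x \<in> K" using mem_K_iff by simp
    also have "\<dots> \<longleftrightarrow> a = 0" using smul_mem_K_iff[OF p xG x(2) px] a by simp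
    finally show "(\<Sum>t\<in>H. chi t (smul a x)) = (if a = 0 then of_nat (card H) else 0)"
      by (simp add: sum_chi_subgrp[OF subgrp_H])
  qed
  also have "\<dots> = of_nat (card H)" using p prime_gt_0_nat by simp
  finally have 1: "(\<Sum>a<p. \<Sum>t\<in>H. chi t (smul a x)) = of_nat (card H)" .
  have "(\<Sum>a<p. \<Sum>t\<in>H. chi t (smul a x)) = (\<Sum>t\<in>H. \<Sum>a<p. chi t x ^ a)"
    by (subst sum.swap) (simp add: chi_smul_right)
  also have "\<dots> = (\<Sum>t\<in>H. if chi t x = 1 then of_nat p else 0)"
  proof (intro sum.cong refl)
    fix t assume t: "t \<in> H"
    have "chi t x ^ p = 1" using chi_H_K[OF t px] by (simp add: chi_smul_right)
    then show "(\<Sum>a<p. chi t x ^ a) = (if chi t x = 1 then of_nat p else 0)"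
      by (cases "chi t x = 1") (auto simp: geometric_sum)
  qed
  also have "\<dots> = of_nat (p * card {t\<in>H. chi t x = 1})"
    using finite_H by (simp add: sum.If_cases Int_def conj_commute)
  finally show ?thesis using 1 by (simp only: of_nat_eq_iff)
qed

lemma exists_prime_multiple_notin_K:
  assumes x: "x \<in> G" "x \<notin> K"
  obtains p q where "prime p" "p \<le> card G" "smul q x \<notin> K" "smul p (smul q x) \<in> K"
proof -
  define m where "m = (LEAST m. 0 < m \<and> smul m x \<in> K)"
  have card_G: "0 < card G \<and> smul (card G) x \<in> K"
    using card_subgrp_pos[OF subgrp_grp] subgrp_zero[OF subgrp_K] by simp
  then have m: "0 < m \<and> smul m x \<in> K" unfolding m_def by (rule LeastI)
  have m_le: "m \<le> card G" unfolding m_def using card_G by (rule Least_le)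
  have "m \<noteq> 1" using m x by auto
  then obtain p where p: "prime p" "p dvd m" using prime_factor_nat by blast
  then obtain q where q: "m = p * q" by blast
  then have "0 < q" "q < m" using m prime_gt_1_nat[OF p(1)] by auto
  then have "smul q x \<notin> K" unfolding m_def using not_less_Least by blast
  moreover have "smul p (smul q x) \<in> K" using m q by (simp add: smul_mult[symmetric])
  moreover have "p \<le> card G" using dvd_imp_le[OF p(2)] m m_le by simp
  ultimately show ?thesis using that p(1) by blast
qed

lemma smul_diff_in_K:
  assumes "a \<le> a'" "y \<in> G" "\<kappa> \<in> K" "\<kappa>' \<in> K" "add (smul a y) \<kappa> = add (smul a' y) \<kappa>'"
  shows "smul (a' - a) y \<in> K"
proof -
  have kG: "\<kappa> \<in> G" "\<kappa>' \<in> G" using assms K_subset by auto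
  have "add (smul a y) \<kappa> = add (smul a y) (add (smul (a' - a) y) \<kappa>')"
    using assms(1,5) smul_add_nat[of a "a' - a" y] by (simp add: add_assoc)
  then have "\<kappa> = add (smul (a' - a) y) \<kappa>'"
    by (rule add_left_cancel[OF kG(1) add_in_grp smul_in_grp])
  then have "add \<kappa> (neg \<kappa>') = smul (a' - a) y" using kG by (simp add: add_assoc)
  moreover have "add \<kappa> (neg \<kappa>') \<in> K"
    using subgrp_add[OF subgrp_K assms(3) subgrp_neg[OF subgrp_K assms(4)]] .
  ultimately show ?thesis by simp
qed

lemma inj_on_smul_add_K:
  assumes p: "prime p" and y: "y \<in> G" "y \<notin> K" "smul p y \<in> K"
  shows "inj_on (\<lambda>(a, \<kappa>). add (smul a y) \<kappa>) ({..<p} \<times> K)"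
proof (rule inj_onI, clarify)
  fix a \<kappa> a' \<kappa>' assume a: "a < p" "\<kappa> \<in> K" "a' < p" "\<kappa>' \<in> K"
    and e: "add (smul a y) \<kappa> = add (smul a' y) \<kappa>'"
  have "b = b'" if "b \<le> b'" "b' < p" "\<nu> \<in> K" "\<nu>' \<in> K" "add (smul b y) \<nu> = add (smul b' y) \<nu>'"
    for b b' \<nu> \<nu>'
  proof -
    have "smul (b' - b) y \<in> K" using smul_diff_in_K[OF _ y(1)] that by blast
    then show ?thesis using smul_mem_K_iff[OF p y, of "b' - b"] that by simp
  qed
  then have "a = a'" using a e by (metis linorder_le_cases)
  then show "a = a' \<and> \<kappa> = \<kappa>'"
    using e add_left_cancel[of \<kappa> \<kappa>' "smul a y"] a(2,4) K_subset by auto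
qed

lemma smul_add_K_mem_smul_preimage:
  assumes p: "prime p" and y: "y \<in> G" "y \<notin> K" "smul p y \<in> K"
    and a: "0 < a" "a < p" and \<kappa>: "\<kappa> \<in> K"
  shows "add (smul a y) \<kappa> \<in> smul_preimage p - K"
proof -
  have kG: "\<kappa> \<in> G" using \<kappa> K_subset by auto
  have "smul p (add (smul a y) \<kappa>) = add (smul a (smul p y)) (smul p \<kappa>)"
    by (simp add: smul_add smul_commute)
  also have "\<dots> \<in> K"
    using subgrp_add[OF subgrp_K subgrp_smul[OF subgrp_K y(3)] subgrp_smul[OF subgrp_K \<kappa>]] .
  finally have "add (smul a y) \<kappa> \<in> smul_preimage p" unfolding smul_preimage_def by simp
  moreover have "add (smul a y) \<kappa> \<notin> K"
  proof
    assume "add (smul a y) \<kappa> \<in> K"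
    then have "add (add (smul a y) \<kappa>) (neg \<kappa>) \<in> K"
      using subgrp_add[OF subgrp_K _ subgrp_neg[OF subgrp_K \<kappa>]] by blast
    moreover have "add (add (smul a y) \<kappa>) (neg \<kappa>) = smul a y" using kG by (simp add: add_ac)
    ultimately show False using smul_mem_K_iff[OF p y a(2)] a(1) by simp
  qed
  ultimately show ?thesis by blast
qed

lemma card_smul_preimage_inter_ge:
  assumes p: "prime p" and S: "subgrp S" "K \<subseteq> S"
    and y: "y \<in> S" "y \<notin> K" "smul p y \<in> K"
  shows "(p - 1) * card K \<le> card ((smul_preimage p - K) \<inter> S)"
proof -
  have yG: "y \<in> G" using y S subgrp_subset by auto
  let ?\<phi> = "\<lambda>(a, \<kappa>). add (smul a y) \<kappa>"
  have "inj_on ?\<phi> ({1..<p} \<times> K)"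
    using inj_on_smul_add_K[OF p yG y(2,3)] by (rule inj_on_subset) auto
  moreover have "?\<phi> ` ({1..<p} \<times> K) \<subseteq> (smul_preimage p - K) \<inter> S"
    using smul_add_K_mem_smul_preimage[OF p yG y(2,3)] S y(1)
    by (auto intro: subgrp_add subgrp_smul)
  moreover have "finite ((smul_preimage p - K) \<inter> S)" using finite_smul_preimage by simp
  ultimately have "card ({1..<p} \<times> K) \<le> card ((smul_preimage p - K) \<inter> S)"
    by (rule card_inj_on_le)
  then show ?thesis by (simp add: card_cartesian_product)
qed

lemma bad_tuple_witness:
  assumes T: "T \<subseteq> H" and ne: "perp T \<noteq> K"
  obtains p where "prime p" "p \<le> card G" "(p - 1) * card K \<le> card ((smul_preimage p - K) \<inter> perp T)"
proof -
  have KT: "K \<subseteq> perp T" using K_subset_perp[OF T] .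
  then obtain x where x: "x \<in> perp T" "x \<notin> K" using ne by blast
  then have "x \<in> G" using perp_subset by auto
  then obtain p q where p: "prime p" "p \<le> card G" "smul q x \<notin> K" "smul p (smul q x) \<in> K"
    using exists_prime_multiple_notin_K x(2) by blast
  have "smul q x \<in> perp T" using subgrp_smul[OF subgrp_perp x(1)] .
  then show ?thesis
    using card_smul_preimage_inter_ge[OF p(1) subgrp_perp KT _ p(3,4)] that p(1,2) by blast
qed

lemma card_tuples_perp_point:
  assumes p: "prime p" and x: "x \<in> smul_preimage p" "x \<notin> K"
  shows "real (card {ts \<in> tuples H h. x \<in> perp (set ts)}) = (real (card H) / real p) ^ h"
proof -
  have "x \<in> G" using x unfolding smul_preimage_def by auto
  then have "{ts \<in> tuples H h. x \<in> perp (set ts)} = tuples {t\<in>H. chi t x = 1} h"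
    unfolding perp_def by auto
  then have "card {ts \<in> tuples H h. x \<in> perp (set ts)} = card {t\<in>H. chi t x = 1} ^ h"
    using finite_H by (simp add: card_lists_length_eq)
  moreover have "real (card {t\<in>H. chi t x = 1}) = real (card H) / real p"
    using card_chi_eq_1[OF assms] prime_gt_0_nat[OF p] by (simp add: field_simps flip: of_nat_mult)
  ultimately show ?thesis by simp
qed

lemma sum_card_inter_perp_tuples:
  assumes p: "prime p" and A: "A \<subseteq> smul_preimage p - K"
  shows "(\<Sum>ts\<in>tuples H h. real (card (A \<inter> perp (set ts))))
    = real (card A) * (real (card H) / real p) ^ h"
proof -
  have fin_A: "finite A" using A finite_smul_preimage finite_subset by blast
  have fin_tuples: "finite (tuples H h)" using finite_H by (simp add: finite_lists_length_eq)
  have "(\<Sum>ts\<in>tuples H h. real (card (A \<inter> perp (set ts))))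
      = (\<Sum>ts\<in>tuples H h. \<Sum>x\<in>A. of_bool (x \<in> perp (set ts)))"
    using fin_A by (simp add: sum_of_bool_eq)
  also have "\<dots> = (\<Sum>x\<in>A. \<Sum>ts\<in>tuples H h. of_bool (x \<in> perp (set ts)))"
    by (rule sum.swap)
  also have "\<dots> = (\<Sum>x\<in>A. real (card {ts \<in> tuples H h. x \<in> perp (set ts)}))"
    using fin_tuples by (simp add: sum_of_bool_eq Int_def)
  also have "\<dots> = (\<Sum>x\<in>A. (real (card H) / real p) ^ h)"
    using A card_tuples_perp_point[OF p] by (intro sum.cong) auto
  finally show ?thesis by simp
qed

lemma one_le_sum_weight_bad_tuple:
  assumes T: "T \<subseteq> H" and ne: "perp T \<noteq> K"
  shows "1 \<le> (\<Sum>p | prime p \<and> p \<le> card G.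
    real (card ((smul_preimage p - K) \<inter> perp T)) / (real (p - 1) * real (card K)))"
proof -
  obtain p where p: "prime p" "p \<le> card G"
    and le: "(p - 1) * card K \<le> card ((smul_preimage p - K) \<inter> perp T)"
    using bad_tuple_witness[OF T ne] .
  have "0 < real (p - 1) * real (card K)"
    using prime_gt_1_nat[OF p(1)] card_K_pos by simp
  moreover have "real (p - 1) * real (card K) \<le> real (card ((smul_preimage p - K) \<inter> perp T))"
    using le by (metis of_nat_le_iff of_nat_mult)
  ultimately have
    "1 \<le> real (card ((smul_preimage p - K) \<inter> perp T)) / (real (p - 1) * real (card K))"
    by (simp only: le_divide_eq_1_pos)
  also have "\<dots> \<le> (\<Sum>p | prime p \<and> p \<le> card G.
      real (card ((smul_preimage p - K) \<inter> perp T)) / (real (p - 1) * real (card K)))"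
    using p by (intro member_le_sum) auto
  finally show ?thesis .
qed

lemma card_bad_tuples_le:
  assumes a: "\<And>p. prime p \<Longrightarrow> card (torsion p H) = p ^ a p"
  shows "real (card {ts \<in> tuples H h. perp (set ts) \<noteq> K})
    \<le> real (card H) ^ h * failure_sum {p. prime p \<and> p \<le> card G} a h"
proof -
  define P where "P = {p. prime p \<and> p \<le> card G}"
  define w where "w p ts = real (card ((smul_preimage p - K) \<inter> perp (set ts)))
    / (real (p - 1) * real (card K))" for p ts
  have fin_tuples: "finite (tuples H h)" using finite_H by (simp add: finite_lists_length_eq)
  have sum_w: "(\<Sum>ts\<in>tuples H h. w p ts)
      = real (card H) ^ h * ((real p ^ a p - 1) / ((real p - 1) * real p ^ h))" if "p \<in> P" for p
  proof -
    have p: "prime p" using that unfolding P_def by simp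
    have "card (smul_preimage p - K) + card K = card K * p ^ a p"
      using card_smul_preimage[of p] a[OF p] card_Diff_subset[OF finite_K K_subset_smul_preimage]
        card_mono[OF finite_smul_preimage K_subset_smul_preimage[of p]] by simp
    then have "real (card (smul_preimage p - K)) + real (card K) = real (card K) * real p ^ a p"
      by (metis of_nat_add of_nat_mult of_nat_power)
    then have card_diff: "real (card (smul_preimage p - K)) = real (card K) * (real p ^ a p - 1)"
      by (simp add: algebra_simps)
    show ?thesis
      unfolding w_def sum_divide_distrib[symmetric] card_diff
        sum_card_inter_perp_tuples[OF p order.refl]
      using prime_gt_1_nat[OF p] card_K_pos by (simp add: of_nat_diff power_divide field_simps)
  qed
  have "real (card {ts \<in> tuples H h. perp (set ts) \<noteq> K})
      = (\<Sum>ts \<in> {ts \<in> tuples H h. perp (set ts) \<noteq> K}. 1)" by simp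
  also have "\<dots> \<le> (\<Sum>ts \<in> {ts \<in> tuples H h. perp (set ts) \<noteq> K}. \<Sum>p\<in>P. w p ts)"
    using one_le_sum_weight_bad_tuple unfolding P_def w_def by (intro sum_mono) auto
  also have "\<dots> \<le> (\<Sum>ts\<in>tuples H h. \<Sum>p\<in>P. w p ts)"
    using fin_tuples by (intro sum_mono2) (auto simp: w_def intro!: sum_nonneg)
  also have "\<dots> = (\<Sum>p\<in>P. \<Sum>ts\<in>tuples H h. w p ts)" by (rule sum.swap)
  also have "\<dots> = real (card H) ^ h * failure_sum P a h"
    unfolding failure_sum_def sum_distrib_left by (intro sum.cong refl sum_w)
  finally show ?thesis unfolding P_def .
qed

lemma glen_grp: "glen G = glen K + size (prime_factorization (card H))"
  unfolding glen_eq_size_prime_factorization card_K_mult_card_H[symmetric]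
  using card_K_pos card_H_pos by (simp add: prime_factorization_mult)

end

section \<open>The measurement statistics\<close>

locale hidden_subgroup = cyclic_sum_subgroup +
  fixes f :: "(nat \<Rightarrow> nat) \<Rightarrow> (nat \<Rightarrow> nat)"
  assumes f_in_grp: "\<forall>x\<in>grp N k. f x \<in> grp N k"
    and f_eq_iff: "\<forall>x\<in>grp N k. \<forall>y\<in>grp N k. f x = f y \<longleftrightarrow> gsub N k x y \<in> K"
begin

lemma fibre_f:
  assumes x0: "x0 \<in> G"
  shows "{x\<in>G. f x = f x0} = add x0 ` K"
proof (intro equalityI subsetI)
  fix x assume x: "x \<in> {x\<in>G. f x = f x0}"
  then have "gsub N k x x0 \<in> K" using f_eq_iff x0 by auto
  then have "add (neg x0) x \<in> K" by (simp add: gsub_def add_comm)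
  moreover have "x = add x0 (add (neg x0) x)" using x x0 by simp
  ultimately show "x \<in> add x0 ` K" by blast
next
  fix x assume "x \<in> add x0 ` K"
  then obtain \<kappa> where \<kappa>: "\<kappa> \<in> K" "x = add x0 \<kappa>" by blast
  then have "gsub N k x x0 = \<kappa>" using x0 K_subset by (auto simp: gsub_def add_ac)
  then show "x \<in> {x\<in>G. f x = f x0}" using f_eq_iff x0 \<kappa> by simp
qed

lemma card_f_image: "card (f ` G) = card H"
proof -
  have "card G = card (f ` G) * card K"
  proof (rule card_eq_card_image_mult_fibre[OF finite_grp])
    fix y assume "y \<in> f ` G"
    then obtain x0 where x0: "x0 \<in> G" "y = f x0" by blast
    then show "card {x\<in>G. f x = y} = card K"
      using fibre_f[OF x0(1)] card_image[OF inj_on_add[OF x0(1) K_subset]] by simp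
  qed
  then show ?thesis using card_K_mult_card_H card_K_pos by simp
qed

lemma qft_entry_eq: "qft_entry N k y x = chi x y / complex_of_real (sqrt (card G))"
  unfolding qft_entry_def chi_def card_grp by (simp add: prod_dividef prod_sqrt flip: of_real_prod)

lemma QFT_init:
  "QFT_I N k init_state y b = (if b = gzero then 1 / complex_of_real (sqrt (card G)) else 0)"
proof -
  have "QFT_I N k init_state y b
      = (\<Sum>x\<in>G. if x = gzero then qft_entry N k y x * (if b = gzero then 1 else 0) else 0)"
    unfolding QFT_I_def apply_first_def init_state_def by (intro sum.cong) auto
  then show ?thesis using finite_grp by (simp add: qft_entry_eq)
qed

lemma Uf_QFT_init:
  assumes "g \<in> G"
  shows "Uf N k f (QFT_I N k init_state) g c
    = (if f g = c then 1 / complex_of_real (sqrt (card G)) else 0)"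
proof -
  have "Uf N k f (QFT_I N k init_state) g c = (\<Sum>b\<in>G. if b = gzero
      then (if add b (f g) = c then 1 / complex_of_real (sqrt (card G)) else 0) else 0)"
    unfolding Uf_def QFT_init by (intro sum.cong) auto
  then show ?thesis using finite_grp f_in_grp assms by simp
qed

lemma final_state_eq:
  "final_state N k f t c = (\<Sum>x\<in>{x\<in>G. f x = c}. cnj (chi t x)) / card G"
proof -
  have "sqrt (real (card G)) * sqrt (real (card G)) = real (card G)" by simp
  then have sq:
    "complex_of_real (sqrt (card G)) * complex_of_real (sqrt (card G)) = of_nat (card G)"
    by (metis of_real_mult of_real_of_nat_eq)
  have "final_state N k f t c = (\<Sum>x\<in>G. if f x = c then cnj (chi t x) / card G else 0)"
    unfolding final_state_def QFTdag_I_def apply_first_def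
    using Uf_QFT_init card_subgrp_pos[OF subgrp_grp]
    by (intro sum.cong refl) (simp add: qft_entry_eq chi_commute sq)
  then show ?thesis using finite_grp by (simp add: sum.If_cases sum_divide_distrib Int_def)
qed

lemma norm_sum_fibre:
  assumes t: "t \<in> G" and x0: "x0 \<in> G"
  shows "norm (\<Sum>x\<in>{x\<in>G. f x = f x0}. cnj (chi t x)) = (if t \<in> H then card K else 0)"
proof -
  have "(\<Sum>x\<in>{x\<in>G. f x = f x0}. cnj (chi t x)) = (\<Sum>\<kappa>\<in>K. cnj (chi t (add x0 \<kappa>)))"
    unfolding fibre_f[OF x0] using inj_on_add[OF x0 K_subset] by (simp add: sum.reindex)
  also have "\<dots> = cnj (chi t x0 * (\<Sum>\<kappa>\<in>K. chi \<kappa> t))"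
    by (simp add: chi_add_right sum_distrib_left chi_commute)
  finally show ?thesis
    using t sum_chi_subgrp[OF subgrp_K, of t] by (simp add: norm_mult perp_def)
qed

lemma outcome_prob_eq:
  assumes t: "t \<in> G"
  shows "outcome_prob N k f t = (if t \<in> H then 1 / card H else 0)"
proof -
  define X where "X = (if t \<in> H then real (card K) ^ 2 / real (card G) ^ 2 else 0)"
  have "outcome_prob N k f t = (\<Sum>c\<in>G. if c \<in> f ` G then X else 0)"
    unfolding outcome_prob_def
  proof (intro sum.cong refl)
    fix c assume "c \<in> G"
    show "(norm (final_state N k f t c))\<^sup>2 = (if c \<in> f ` G then X else 0)"
    proof (cases "c \<in> f ` G")
      case True
      then obtain x0 where "x0 \<in> G" "c = f x0" by blast
      then show ?thesis
        using True norm_sum_fibre[OF t] unfolding final_state_eq X_def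
        by (simp add: norm_divide power_divide)
    next
      case False
      then have empty: "{x\<in>G. f x = c} = {}" by auto
      show ?thesis unfolding final_state_eq empty using False by simp
    qed
  qed
  also have "\<dots> = real (card (f ` G)) * X"
    using finite_grp f_in_grp by (simp add: sum.If_cases Int_absorb1 image_subset_iff)
  also have "\<dots> = (if t \<in> H then 1 / card H else 0)"
    unfolding X_def card_f_image card_K_mult_card_H[symmetric] using card_K_pos card_H_pos
    by (simp add: power2_eq_square field_simps)
  finally show ?thesis .
qed

lemma prob_success_eq:
  "prob_success N k f h K = real (card {ts \<in> tuples H h. perp (set ts) = K}) / real (card H) ^ h"
proof -
  define good where "good = {ts \<in> tuples H h. perp (set ts) = K}"
  have "prob_success N k f h K = (\<Sum>ts\<in>tuples G h. if ts \<in> good then (1 / card H) ^ h else 0)"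
    unfolding prob_success_def output_set_eq_perp
  proof (intro sum.cong)
    fix ts assume ts: "ts \<in> tuples G h"
    then have "prod_list (map (outcome_prob N k f) ts)
        = (if set ts \<subseteq> H then (1 / card H) ^ h else 0)"
      by (induction ts arbitrary: h) (auto simp: outcome_prob_eq)
    then show "(if perp (set ts) = K then prod_list (map (outcome_prob N k f) ts) else 0)
      = (if ts \<in> good then (1 / card H) ^ h else 0)"
      using ts unfolding good_def by auto
  qed (auto simp: conj_commute)
  also have "\<dots> = (\<Sum>ts\<in>{ts \<in> tuples G h. ts \<in> good}. (1 / card H) ^ h)"
    using finite_grp by (intro sum.inter_filter[symmetric]) (simp add: finite_lists_length_eq)
  also have "{ts \<in> tuples G h. ts \<in> good} = good"
    using perp_subset unfolding good_def by auto
  finally show ?thesis unfolding good_def by (simp add: power_one_over)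
qed

lemma prob_success_ge:
  assumes a: "\<And>p. prime p \<Longrightarrow> card (torsion p H) = p ^ a p"
  shows "1 - failure_sum {p. prime p \<and> p \<le> card G} a h \<le> prob_success N k f h K"
proof -
  define good where "good = {ts \<in> tuples H h. perp (set ts) = K}"
  define bad where "bad = {ts \<in> tuples H h. perp (set ts) \<noteq> K}"
  have "tuples H h \<inter> {ts. perp (set ts) = K} = good" "tuples H h - {ts. perp (set ts) = K} = bad"
    unfolding good_def bad_def by auto
  then have "card good + card bad = card H ^ h"
    using card_Int_Diff[of "tuples H h" "{ts. perp (set ts) = K}"] finite_H
    by (simp add: finite_lists_length_eq card_lists_length_eq)
  then have "real (card good) = real (card H) ^ h - real (card bad)"
    by (metis add_diff_cancel_right' of_nat_add of_nat_power)
  then have "prob_success N k f h K = 1 - real (card bad) / real (card H) ^ h"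
    unfolding prob_success_eq good_def[symmetric] using card_H_pos
    by (simp add: diff_divide_distrib)
  moreover have "real (card bad) / real (card H) ^ h \<le> failure_sum {p. prime p \<and> p \<le> card G} a h"
    using card_bad_tuples_le[OF a, of h] card_H_pos unfolding bad_def
    by (simp add: divide_le_eq mult.commute)
  ultimately show ?thesis by simp
qed

lemma prob_success_ge_by_rank:
  assumes \<epsilon>: "0 < \<epsilon>" "\<epsilon> < 2" and h: "int (grank N k) + \<lceil>log 2 (2 / \<epsilon>)\<rceil> \<le> int h"
  shows "1 - \<epsilon> \<le> prob_success N k f h K"
proof -
  obtain a where
    a: "\<And>p. prime p \<Longrightarrow> card (torsion p H) = p ^ a p \<and> a p \<le> prank p \<and> p ^ a p dvd card H"
    using torsion_exponents by blast
  have "\<forall>p \<in> {p. prime p \<and> p \<le> card G}. a p \<le> grank N k"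
    using a prank_le_grank order_trans by blast
  then have "failure_sum {p. prime p \<and> p \<le> card G} a h \<le> \<epsilon>"
    using \<epsilon> h by (intro failure_sum_le_rank) (auto simp: prime_ge_2_nat)
  then show ?thesis using prob_success_ge[of a h] a by fastforce
qed

lemma prob_success_ge_by_length:
  assumes \<epsilon>: "0 < \<epsilon>" "\<epsilon> \<le> 1"
    and h: "int (glen G) - int (glen K) + \<lceil>log 2 (1 / \<epsilon>)\<rceil> \<le> int h"
  shows "1 - \<epsilon> \<le> prob_success N k f h K"
proof -
  obtain a where
    a: "\<And>p. prime p \<Longrightarrow> card (torsion p H) = p ^ a p \<and> a p \<le> prank p \<and> p ^ a p dvd card H"
    using torsion_exponents by blast
  have "failure_sum {p. prime p \<and> p \<le> card G} a h \<le> \<epsilon>"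
    using a \<epsilon> h card_H_pos unfolding glen_grp by (intro failure_sum_le_length) auto
  then show ?thesis using prob_success_ge[of a h] a by fastforce
qed

end

theorem theorem1:
  fixes N :: "nat \<Rightarrow> nat" and k :: nat and K :: "(nat \<Rightarrow> nat) set"
    and f :: "(nat \<Rightarrow> nat) \<Rightarrow> (nat \<Rightarrow> nat)" and \<epsilon> :: real and h :: nat
  assumes "\<forall>j<k. \<exists>p e. prime p \<and> e \<ge> 1 \<and> N j = p ^ e"
    and "is_subgroup N k K"
    and "\<forall>x\<in>grp N k. f x \<in> grp N k"
    and "\<forall>x\<in>grp N k. \<forall>y\<in>grp N k. f x = f y \<longleftrightarrow> gsub N k x y \<in> K"
    and "0 < \<epsilon>" and "\<epsilon> < 1"
    and "int h \<ge> int (grank N k) + \<lceil>log 2 (2 / \<epsilon>)\<rceil>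
         \<or> int h \<ge> int (glen (grp N k)) - int (glen K) + \<lceil>log 2 (1 / \<epsilon>)\<rceil>"
  shows "prob_success N k f h K \<ge> 1 - \<epsilon>"
proof -
  have "gzero \<in> grp N k" using assms(2) unfolding is_subgroup_def by blast
  then have "\<And>j. j < k \<Longrightarrow> 0 < N j" unfolding grp_def gzero_def by auto
  then interpret hidden_subgroup N k K f using assms(2-4) by unfold_locales
  show ?thesis
    using assms(7)
  proof
    assume "int (grank N k) + \<lceil>log 2 (2 / \<epsilon>)\<rceil> \<le> int h"
    then show ?thesis using assms(5,6) by (intro prob_success_ge_by_rank) auto
  next
    assume "int (glen G) - int (glen K) + \<lceil>log 2 (1 / \<epsilon>)\<rceil> \<le> int h"
    then show ?thesis using assms(5,6) by (intro prob_success_ge_by_length) auto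
  qed
qed

end
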